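(* Let $u\in(0,1]$, $w\in[0,1]$, $R>1$, and let $f:(0,\infty)\to[0,\infty)$, $N\mapsto f_N$, be a non-increasing function. For $x_C,x_D\geqslant 0$ with $x_C+x_D>0$ put $\pi_C(x_C,x_D)=R\frac{x_C}{x_C+x_D}-1$ and $\pi_D(x_C,x_D)=R\frac{x_C}{x_C+x_D}$, and consider the system $$x_C=\Big[\big(1-\tfrac{u}{2}\big)x_C\big(1+w\pi_C(x_C,x_D)\big)+\tfrac{u}{2}\,x_D\big(1+w\pi_D(x_C,x_D)\big)\Big]f_{x_C+x_D},$$ $$x_D=\Big[\tfrac{u}{2}\,x_C\big(1+w\pi_C(x_C,x_D)\big)+\big(1-\tfrac{u}{2}\big)x_D\big(1+w\pi_D(x_C,x_D)\big)\Big]f_{x_C+x_D}.$$ Then there exists $p\in(0,1)$ such that every solution $(x_C,x_D)$ of this system with $x_C,x_D\geqslant 0$ and $x_C+x_D>0$ satisfies $\frac{x_C}{x_C+x_D}=p$. That is, the fraction of cooperators is the same in every non-zero solution.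
   Context: The setting is a population of cooperators and defectors. $x_C$ and $x_D$ denote the expected numbers of cooperators and defectors, and the system above is the fixed-point ("metastable equilibrium") condition for the expected next-generation counts. Here $u$ is the mutation rate: an offspring switches to the other strategy with probability $u/2$. $w$ is the cost of cooperation, $R$ is the multiplication factor of a public goods game, and $f_N$ is the baseline reproductive capacity at population size $N$. *)

theory Defs
  imports Complex_Main
begin

definition piC :: "real \<Rightarrow> real \<Rightarrow> real \<Rightarrow> real" where
  "piC R xC xD = R * (xC / (xC + xD)) - 1"

definition piD :: "real \<Rightarrow> real \<Rightarrow> real \<Rightarrow> real" where
  "piD R xC xD = R * (xC / (xC + xD))"

end

theory Submission
  imports Defs
begin

text \<open>Dividing the system by the population size \<open>N = xC + xD\<close> turns it into a system for the
  cooperator fraction \<open>q = xC / N\<close> alone, scaled by the common factor \<open>f N\<close>. Adding the two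
  equations expresses \<open>1 / f N\<close> through \<open>q\<close>; eliminating it leaves a quadratic equation in \<open>q\<close>
  which is negative at \<open>q = 0\<close> and positive at \<open>q = 1\<close>. A real quadratic with this sign pattern
  has exactly one root in \<open>[0, 1]\<close>, so every solution has the same fraction \<open>q\<close>.\<close>

lemma quadratic_unique_root_in_unit_interval:
  fixes a b c :: real
  assumes neg0: "c < 0" and pos1: "a + b + c > 0"
  shows "\<exists>!p. 0 \<le> p \<and> p \<le> 1 \<and> a * p^2 + b * p + c = 0"
proof -
  define g where "g x = a * x^2 + b * x + c" for x :: real
  have "continuous_on {0..1} g" unfolding g_def by (intro continuous_intros)
  moreover have "g 0 \<le> 0" "0 \<le> g 1" using neg0 pos1 by (simp_all add: g_def)
  ultimately obtain p where p: "0 \<le> p" "p \<le> 1" "g p = 0"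
    using IVT'[of g 0 0 1] by auto
  have "q = p" if q: "0 \<le> q" "q \<le> 1" "g q = 0" for q
  proof (rule ccontr)
    assume "q \<noteq> p"
    moreover have "(q - p) * (a * (q + p) + b) = g q - g p"
      by (simp add: g_def algebra_simps power2_eq_square)
    ultimately have roots_sum: "b = - a * (q + p)" using p q by simp
    \<comment> \<open>Vieta: \<open>g x = a (x - p) (x - q)\<close>, so \<open>c = a p q < 0\<close> forces \<open>a < 0\<close> and then \<open>g 1 \<le> 0\<close>.\<close>
    have roots_prod: "c = a * (p * q)"
      using p(3) roots_sum by (simp add: g_def algebra_simps power2_eq_square)
    have "a < 0"
      using roots_prod neg0 p(1) q(1) by (metis mult_nonneg_nonneg not_less)
    moreover have "g 1 = a * ((1 - p) * (1 - q))"
      using roots_sum roots_prod by (simp add: g_def algebra_simps)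
    moreover have "(1 - p) * (1 - q) \<ge> 0" using p q by simp
    ultimately have "g 1 \<le> 0" by (simp add: mult_nonpos_nonneg)
    then show False using pos1 by (simp add: g_def)
  qed
  then show ?thesis using p unfolding g_def by blast
qed

lemma cooperator_fraction_system:
  fixes u w R F xC xD :: real
  defines "q \<equiv> xC / (xC + xD)"
  assumes total_pos: "xC + xD > 0"
    and eC: "xC = ((1 - u/2) * xC * (1 + w * piC R xC xD) + (u/2) * xD * (1 + w * piD R xC xD)) * F"
    and eD: "xD = ((u/2) * xC * (1 + w * piC R xC xD) + (1 - u/2) * xD * (1 + w * piD R xC xD)) * F"
  shows "q = ((1 - u/2) * q * (1 + w * (R*q - 1)) + (u/2) * (1 - q) * (1 + w * (R*q))) * F"
    and "1 - q = ((u/2) * q * (1 + w * (R*q - 1)) + (1 - u/2) * (1 - q) * (1 + w * (R*q))) * F"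
proof -
  define N where "N = xC + xD"
  have N_pos: "N > 0" using total_pos N_def by simp
  have payoffs: "piC R xC xD = R*q - 1" "piD R xC xD = R*q"
    by (simp_all add: piC_def piD_def q_def)
  have xC: "xC = q * N" and xD: "xD = (1 - q) * N"
    using total_pos by (simp_all add: q_def N_def field_simps)
  have "q * N = ((1 - u/2) * (q * N) * (1 + w * (R*q - 1)) + (u/2) * ((1 - q) * N) * (1 + w * (R*q))) * F"
    using eC unfolding payoffs unfolding xC xD .
  also have "\<dots> = ((1 - u/2) * q * (1 + w * (R*q - 1)) + (u/2) * (1 - q) * (1 + w * (R*q))) * F * N"
    by (simp add: field_simps)
  finally show "q = ((1 - u/2) * q * (1 + w * (R*q - 1)) + (u/2) * (1 - q) * (1 + w * (R*q))) * F"
    using N_pos by simp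
  have "(1 - q) * N = ((u/2) * (q * N) * (1 + w * (R*q - 1)) + (1 - u/2) * ((1 - q) * N) * (1 + w * (R*q))) * F"
    using eD unfolding payoffs unfolding xC xD .
  also have "\<dots> = ((u/2) * q * (1 + w * (R*q - 1)) + (1 - u/2) * (1 - q) * (1 + w * (R*q))) * F * N"
    by (simp add: field_simps)
  finally show "1 - q = ((u/2) * q * (1 + w * (R*q - 1)) + (1 - u/2) * (1 - q) * (1 + w * (R*q))) * F"
    using N_pos by simp
qed

lemma cooperator_fraction_quadratic:
  fixes u w R q F :: real
  assumes eC: "q = ((1 - u/2) * q * (1 + w * (R*q - 1)) + (u/2) * (1 - q) * (1 + w * (R*q))) * F"
    and eD: "1 - q = ((u/2) * q * (1 + w * (R*q - 1)) + (1 - u/2) * (1 - q) * (1 + w * (R*q))) * F"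
  shows "w * (u*R - 1) * q^2 + (u + w * (1 - u/2 - u*R/2)) * q - u/2 = 0"
proof -
  let ?a = "1 + w * (R*q - 1)" and ?b = "1 + w * (R*q)"
  have total: "1 = (q * ?a + (1 - q) * ?b) * F" using eC eD by (simp add: algebra_simps)
  then have "F \<noteq> 0" by auto
  moreover have "q * (q * ?a + (1 - q) * ?b) * F = ((1 - u/2) * q * ?a + (u/2) * (1 - q) * ?b) * F"
    using total eC by (metis mult.assoc mult.commute mult.right_neutral)
  ultimately have "q * (q * ?a + (1 - q) * ?b) = (1 - u/2) * q * ?a + (u/2) * (1 - q) * ?b"
    by simp
  then show ?thesis by (simp add: algebra_simps power2_eq_square) argo
qed

theorem mainTheorem1:
  fixes u w R :: real and f :: "real \<Rightarrow> real"
  assumes hu: "0 < u" "u \<le> 1"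
    and hw: "0 \<le> w" "w \<le> 1"
    and hR: "R > 1"
    and hf_nonneg: "\<And>N. N > 0 \<Longrightarrow> f N \<ge> 0"
    and hf_mono: "\<And>a b. 0 < a \<Longrightarrow> a \<le> b \<Longrightarrow> f b \<le> f a"
  shows "\<exists>p. 0 < p \<and> p < 1 \<and>
    (\<forall>xC xD. xC \<ge> 0 \<longrightarrow> xD \<ge> 0 \<longrightarrow> xC + xD > 0 \<longrightarrow>
      xC = ((1 - u/2) * xC * (1 + w * piC R xC xD) + (u/2) * xD * (1 + w * piD R xC xD)) * f (xC + xD) \<longrightarrow>
      xD = ((u/2) * xC * (1 + w * piC R xC xD) + (1 - u/2) * xD * (1 + w * piD R xC xD)) * f (xC + xD) \<longrightarrow>
      xC / (xC + xD) = p)"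
proof -
  let ?a = "w * (u*R - 1)" and ?b = "u + w * (1 - u/2 - u*R/2)" and ?c = "- u/2"
  have "?a + ?b + ?c = u/2 * (1 + w * (R - 1))" by (simp add: algebra_simps)
  also have "\<dots> > 0" using hu hw hR by (simp add: add_pos_nonneg)
  finally have sum_pos: "?a + ?b + ?c > 0" .
  moreover have "?c < 0" using hu by simp
  ultimately obtain p where p: "0 \<le> p" "p \<le> 1" "?a * p^2 + ?b * p + ?c = 0"
    and unique: "\<And>q. 0 \<le> q \<Longrightarrow> q \<le> 1 \<Longrightarrow> ?a * q^2 + ?b * q + ?c = 0 \<Longrightarrow> q = p"
    using quadratic_unique_root_in_unit_interval[of ?c ?a ?b] by blast
  have "p \<noteq> 0" using p(3) hu by auto
  moreover have "p \<noteq> 1" using p(3) sum_pos by (auto simp del: ring_distribs)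
  ultimately have "0 < p" "p < 1" using p by auto
  moreover have "xC / (xC + xD) = p"
    if "xC \<ge> 0" "xD \<ge> 0" "xC + xD > 0"
      and "xC = ((1 - u/2) * xC * (1 + w * piC R xC xD) + (u/2) * xD * (1 + w * piD R xC xD)) * f (xC + xD)"
      and "xD = ((u/2) * xC * (1 + w * piC R xC xD) + (1 - u/2) * xD * (1 + w * piD R xC xD)) * f (xC + xD)"
    for xC xD
    using that cooperator_fraction_quadratic[OF cooperator_fraction_system[OF that(3-5)]]
    by (intro unique) simp_all
  ultimately show ?thesis by blast
qed

end
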